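(* Let $b$ be a positive integer, and let $w$ and $w'$ be (the 0-1 sequences of) $b$-bounded walks, possibly of different lengths. Then the concatenation of $w$ followed by the reversal of $w'$ (i.e. the sequence $w_1\cdots w_k\,w'_{k'}w'_{k'-1}\cdots w'_1$) is a bidirectional ballot sequence; equivalently, the concatenation of the walk $w$ followed by the reverse of the walk $w'$ is a bidirectional ballot walk.
   Context: A ballot sequence is a 0-1 sequence in which every nonempty prefix contains strictly more 1's than 0's; a bidirectional ballot sequence is a 0-1 sequence in which every nonempty prefix and every nonempty suffix contains strictly more 1's than 0's. A 0-1 sequence corresponds to a lattice walk starting at the origin, where each term $1$ is a step $(1,1)$ and each term $0$ is a step $(1,-1)$; ballot walks and bidirectional ballot walks are the walks of ballot sequences and bidirectional ballot sequences. For a positive integer $b$, a $b$-bounded walk is a ballot walk that never visits a point with $y>2b$ and whose endpoint has $y>b$. *)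

theory Defs
  imports Main
begin

text \<open>0-1 sequences are represented as lists of bools: True = 1, False = 0.
  The height of a sequence (endpoint y-coordinate of its walk) is #1's - #0's.\<close>

definition height :: "bool list \<Rightarrow> int" where
  "height xs = int (length (filter id xs)) - int (length (filter Not xs))"

definition ballot :: "bool list \<Rightarrow> bool" where
  "ballot xs \<longleftrightarrow> (\<forall>i. 1 \<le> i \<and> i \<le> length xs \<longrightarrow> height (take i xs) > 0)"

definition bidirectional_ballot :: "bool list \<Rightarrow> bool" where
  "bidirectional_ballot xs \<longleftrightarrow>
     (\<forall>i. 1 \<le> i \<and> i \<le> length xs \<longrightarrow> height (take i xs) > 0) \<and>
     (\<forall>i. 1 \<le> i \<and> i \<le> length xs \<longrightarrow> height (drop (length xs - i) xs) > 0)"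

text \<open>b-bounded walk: ballot walk never visiting a point with y > 2b
  (the visited points are the prefix endpoints, including the origin), ending with y > b.\<close>

definition bounded_walk :: "nat \<Rightarrow> bool list \<Rightarrow> bool" where
  "bounded_walk b xs \<longleftrightarrow> ballot xs \<and>
     (\<forall>i \<le> length xs. height (take i xs) \<le> 2 * int b) \<and>
     height xs > int b"

end

theory Submission
  imports Defs
begin

text \<open>A \<open>b\<close>-bounded walk ends above height \<open>b\<close> and never exceeds \<open>2b\<close>, so each of
  its suffixes has height \<open>> -b\<close>. Hence every prefix of \<open>w @ rev w'\<close> is either a
  prefix of the ballot walk \<open>w\<close>, or consists of \<open>w\<close> (height \<open>> b\<close>) followed by a
  reversed suffix of \<open>w'\<close> (height \<open>> -b\<close>). Suffixes are handled by the same
  argument applied to the reversal \<open>w' @ rev w\<close>.\<close>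

lemma height_append [simp]: "height (xs @ ys) = height xs + height ys"
  by (simp add: height_def)

lemma height_rev [simp]: "height (rev xs) = height xs"
  by (simp add: height_def rev_filter [symmetric])

lemma height_drop: "height (drop k xs) = height xs - height (take k xs)"
  by (metis append_take_drop_id add_diff_cancel_left' height_append)

lemma height_suffix_eq_height_take_rev:
  "height (drop (length xs - i) xs) = height (take i (rev xs))"
  by (simp add: take_rev)

lemma bounded_walk_height_take_pos:
  "bounded_walk b w \<Longrightarrow> 1 \<le> i \<Longrightarrow> i \<le> length w \<Longrightarrow> height (take i w) > 0"
  by (simp add: bounded_walk_def ballot_def)

lemma bounded_walk_height_drop_gt:
  assumes "bounded_walk b w" "k \<le> length w"
  shows "height (drop k w) > - int b"
proof -
  have "height (take k w) \<le> 2 * int b" "height w > int b"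
    using assms by (auto simp: bounded_walk_def)
  then show ?thesis by (simp add: height_drop)
qed

lemma bounded_walk_append_rev_prefix_pos:
  assumes w: "bounded_walk b w" and w': "bounded_walk b w'"
    and i: "1 \<le> i" "i \<le> length (w @ rev w')"
  shows "height (take i (w @ rev w')) > 0"
proof (cases "i \<le> length w")
  case True
  then show ?thesis using bounded_walk_height_take_pos [OF w] i by simp
next
  case False
  define k where "k = length w' - (i - length w)"
  have "take i (w @ rev w') = w @ rev (drop k w')"
    using False by (simp add: take_rev k_def)
  moreover have "height w > int b"
    using w by (simp add: bounded_walk_def)
  moreover have "height (drop k w') > - int b"
    using bounded_walk_height_drop_gt [OF w'] by (simp add: k_def)
  ultimately show ?thesis by simp
qed

theorem lemma11:
  fixes b :: nat and w w' :: "bool list"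
  assumes "b > 0"
    and "bounded_walk b w"
    and "bounded_walk b w'"
  shows "bidirectional_ballot (w @ rev w')"
proof -
  have "rev (w @ rev w') = w' @ rev w" by simp
  then show ?thesis
    unfolding bidirectional_ballot_def height_suffix_eq_height_take_rev
    using bounded_walk_append_rev_prefix_pos [OF assms(2,3)]
      bounded_walk_append_rev_prefix_pos [OF assms(3,2)]
    by (simp add: add.commute)
qed

end
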